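(* Let $M\ni h$ be a positive definite lattice with a distinguished vector $h$, $h^2=3$, such that $h$ is characteristic in $M$ and $M$ contains an $h$-plane. Let $S=S(M)$ be the index-$3$ overlattice of $h^\perp\oplus\mathbb Z\hbar$ (with $h^\perp\subset M$ the orthogonal complement of $h$ and $\hbar^2=12$) obtained by adjoining $\tfrac13(3l-h+\hbar)$, where $l$ is any $h$-plane of $M$ (the result does not depend on the choice of $l$). Then: (1) $S$ is even and positive definite; (2) $\hbar\in 4S^\vee$; (3) the orthogonal complement of $\hbar$ in $S$ coincides with $h^\perp\subset M$; in particular their sets of roots (vectors of square $2$) coincide; (4) the map $x\mapsto\tfrac13(3x-h+\hbar)$ is a bijection between the $h$-planes of $M$ and the planes of $S$; (5) the same map is a bijection between the vectors $e\in M$ with $e^2=e\cdot h=1$ and the vectors $e\in S$ with $e^2=2$, $e\cdot\hbar=4$.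
   Context: A lattice is a free abelian group of finite rank with a symmetric bilinear form $x\cdot y$ valued in $\mathbb Z$; $L^\vee=\{x\in L\otimes\mathbb Q: x\cdot y\in\mathbb Z\ \forall y\in L\}$. A vector $v\in M$ is characteristic if $x^2\equiv x\cdot v\pmod 2$ for all $x\in M$. An $h$-plane in $M$ is a vector $l$ with $l^2=3$, $l\cdot h=1$. A plane in $S$ is a vector $l\in S$ with $l^2=l\cdot\hbar=4$. A lattice is even if $x^2\in2\mathbb Z$ for all $x$. *)

theory Defs
  imports "HOL-Analysis.Analysis"
begin

text \<open>Lattices are modelled as full-rank-in-their-span free abelian subgroups of a
Euclidean space (the bilinear form is the inner product, so positive definiteness
of the form on L tensor R is built in).\<close>

definition int_span :: "'v::real_vector set \<Rightarrow> 'v set" where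
  "int_span B = {(\<Sum>b\<in>B. of_int (c b) *\<^sub>R b) | c. True}"

definition is_lattice :: "'v::euclidean_space set \<Rightarrow> bool" where
  "is_lattice L \<longleftrightarrow> (\<exists>B. finite B \<and> independent B \<and> L = int_span B) \<and>
     (\<forall>x\<in>L. \<forall>y\<in>L. x \<bullet> y \<in> \<int>)"

text \<open>L tensor Q, realised inside the ambient real space.\<close>
definition qspan :: "'v::real_vector set \<Rightarrow> 'v set" where
  "qspan L = {x. \<exists>n::nat. n > 0 \<and> real n *\<^sub>R x \<in> L}"

definition dual :: "'v::real_inner set \<Rightarrow> 'v set" where
  "dual L = {x \<in> qspan L. \<forall>y\<in>L. x \<bullet> y \<in> \<int>}"

definition characteristic :: "'v::real_inner set \<Rightarrow> 'v \<Rightarrow> bool" where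
  "characteristic L v \<longleftrightarrow> v \<in> L \<and> (\<forall>x\<in>L. \<exists>k::int. x \<bullet> x - x \<bullet> v = 2 * k)"

definition is_even :: "'v::real_inner set \<Rightarrow> bool" where
  "is_even L \<longleftrightarrow> (\<forall>x\<in>L. \<exists>k::int. x \<bullet> x = 2 * k)"

definition pos_def :: "'v::real_inner set \<Rightarrow> bool" where
  "pos_def L \<longleftrightarrow> (\<forall>x\<in>L. x \<noteq> 0 \<longrightarrow> x \<bullet> x > 0)"

definition h_plane :: "'v::real_inner set \<Rightarrow> 'v \<Rightarrow> 'v \<Rightarrow> bool" where
  "h_plane M h l \<longleftrightarrow> l \<in> M \<and> l \<bullet> l = 3 \<and> l \<bullet> h = 1"

definition hperp :: "'v::real_inner set \<Rightarrow> 'v \<Rightarrow> 'v set" where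
  "hperp M h = {x \<in> M. x \<bullet> h = 0}"

text \<open>The ambient space of S is (M tensor R) + R hbar, with hbar orthogonal to M
and hbar^2 = 12.\<close>
definition hbar :: "'v::real_inner \<times> real" where
  "hbar = (0, sqrt 12)"

definition plane_map :: "'v::real_inner \<Rightarrow> 'v \<Rightarrow> 'v \<times> real" where
  "plane_map h x = (1/3) *\<^sub>R ((3 *\<^sub>R x - h, 0) + hbar)"

definition S_of :: "'v::real_inner set \<Rightarrow> 'v \<Rightarrow> 'v \<Rightarrow> ('v \<times> real) set" where
  "S_of M h l = {(x, 0) + of_int m *\<^sub>R hbar + of_int j *\<^sub>R plane_map h l
                  | x m j. x \<in> hperp M h}"

end

theory Submission
  imports Defs
begin

text \<open>Everything follows from one injective linear map
  y \<mapsto> (y - (y\<cdot>h/3) h, (y\<cdot>h) \<hbar>/3) from M into (M \<otimes> R) \<oplus> R \<hbar>.  It sends h to \<hbar>,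
  fixes h-perp, and agrees with x \<mapsto> (3x - h + \<hbar>)/3 wherever x\<cdot>h = 1, so its image is
  S(M) for every choice of the h-plane l.  It turns the form into y\<cdot>z + (y\<cdot>h)(z\<cdot>h) and
  the functional y\<cdot>h into one quarter of the pairing with \<hbar>; the orthogonal complement
  of \<hbar> and the two bijections are read off from these identities.  Evenness is
  y\<cdot>y + a*a = (y\<cdot>y - y\<cdot>h) + a(a+1) with a = y\<cdot>h, whose first summand is even because
  h is characteristic.\<close>

definition S_embed :: "'v::real_inner \<Rightarrow> 'v \<Rightarrow> 'v \<times> real" where
  "S_embed h y = (y - ((y \<bullet> h) / 3) *\<^sub>R h, (y \<bullet> h) * sqrt 12 / 3)"

lemma sqrt_12_squared: "sqrt 12 * sqrt 12 = (12::real)"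
  by simp

lemma inner_S_embed:
  "h \<bullet> h = 3 \<Longrightarrow> S_embed h y \<bullet> S_embed h z = y \<bullet> z + (y \<bullet> h) * (z \<bullet> h)"
  by (simp add: S_embed_def inner_diff_left inner_diff_right inner_commute algebra_simps
      sqrt_12_squared)

lemma inner_S_embed_hbar: "S_embed h y \<bullet> hbar = 4 * (y \<bullet> h)"
  by (simp add: S_embed_def hbar_def sqrt_12_squared algebra_simps)

lemma linear_S_embed: "linear (S_embed h)"
  by (rule linearI)
     (simp_all add: S_embed_def algebra_simps inner_add_left add_divide_distrib
       flip: scaleR_add_left)

lemma inj_S_embed: "inj (S_embed h)"
proof
  fix y z assume "S_embed h y = S_embed h z"
  then have "y \<bullet> h = z \<bullet> h" and "y - ((y \<bullet> h) / 3) *\<^sub>R h = z - ((z \<bullet> h) / 3) *\<^sub>R h"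
    by (auto simp: S_embed_def)
  then show "y = z" by simp
qed

lemma S_embed_self: "h \<bullet> h = 3 \<Longrightarrow> S_embed h h = hbar"
  by (simp add: S_embed_def hbar_def)

lemma S_embed_orthogonal: "x \<bullet> h = 0 \<Longrightarrow> S_embed h x = (x, 0)"
  by (simp add: S_embed_def)

lemma plane_map_eq_S_embed: "x \<bullet> h = 1 \<Longrightarrow> plane_map h x = S_embed h x"
  by (simp add: S_embed_def plane_map_def hbar_def algebra_simps)

lemma inj_plane_map: "inj (plane_map h)"
  by (rule injI) (auto simp: plane_map_def hbar_def)

lemma int_span_lincomb:
  assumes "x \<in> int_span B" "y \<in> int_span B"
  shows "of_int a *\<^sub>R x + of_int b *\<^sub>R y \<in> int_span B"
proof -
  from assms obtain c d where x: "x = (\<Sum>v\<in>B. of_int (c v) *\<^sub>R v)"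
    and y: "y = (\<Sum>v\<in>B. of_int (d v) *\<^sub>R v)"
    by (auto simp: int_span_def)
  have "of_int a *\<^sub>R x + of_int b *\<^sub>R y = (\<Sum>v\<in>B. of_int (a * c v + b * d v) *\<^sub>R v)"
    by (simp add: x y scaleR_sum_right sum.distrib scaleR_add_left)
  then show ?thesis
    unfolding int_span_def by (auto intro!: exI[of _ "\<lambda>v. a * c v + b * d v"])
qed

lemma int_span_linear_image:
  assumes f: "linear f" "inj f"
  shows "int_span (f ` B) = f ` int_span B"
proof -
  have sum_image: "(\<Sum>v\<in>f ` B. of_int (c v) *\<^sub>R v) = f (\<Sum>v\<in>B. of_int (c (f v)) *\<^sub>R v)"
    for c
    by (simp add: sum.reindex inj_on_subset[OF f(2)] linear_sum[OF f(1)]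
        linear_scale[OF f(1)] o_def)
  show ?thesis
  proof (intro equalityI subsetI)
    fix x assume "x \<in> int_span (f ` B)"
    then obtain c where "x = (\<Sum>v\<in>f ` B. of_int (c v) *\<^sub>R v)"
      by (auto simp: int_span_def)
    then show "x \<in> f ` int_span B"
      unfolding sum_image int_span_def by (auto intro!: exI[of _ "\<lambda>v. c (f v)"])
  next
    fix x assume "x \<in> f ` int_span B"
    then obtain c where "x = f (\<Sum>v\<in>B. of_int (c v) *\<^sub>R v)"
      by (auto simp: int_span_def)
    also have "\<dots> = (\<Sum>v\<in>f ` B. of_int ((c \<circ> inv f) v) *\<^sub>R v)"
      using f(2) by (simp add: sum_image)
    finally show "x \<in> int_span (f ` B)"
      unfolding int_span_def by (auto intro!: exI[of _ "c \<circ> inv f"])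
  qed
qed

lemma lattice_lincomb:
  "is_lattice M \<Longrightarrow> x \<in> M \<Longrightarrow> y \<in> M \<Longrightarrow> of_int a *\<^sub>R x + of_int b *\<^sub>R y \<in> M"
  using int_span_lincomb unfolding is_lattice_def by blast

lemma lattice_inner_Ints: "is_lattice M \<Longrightarrow> x \<in> M \<Longrightarrow> y \<in> M \<Longrightarrow> x \<bullet> y \<in> \<int>"
  unfolding is_lattice_def by blast

lemma lattice_linear_image:
  assumes "is_lattice M" "linear f" "inj f" and "\<forall>x\<in>M. \<forall>y\<in>M. f x \<bullet> f y \<in> \<int>"
  shows "is_lattice (f ` M)"
proof -
  obtain B where B: "finite B" "independent B" "M = int_span B"
    using assms(1) unfolding is_lattice_def by blast
  have "independent (f ` B)"
    using linear_independent_injective_image[OF assms(2) B(2)] assms(3) inj_on_subset by blast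
  moreover have "f ` M = int_span (f ` B)"
    using B(3) int_span_linear_image[OF assms(2,3)] by simp
  ultimately show ?thesis
    unfolding is_lattice_def using B(1) assms(4) by blast
qed

lemma S_of_eq_S_embed_image:
  assumes M: "is_lattice M" "h \<in> M" "h \<bullet> h = 3" and l: "h_plane M h l"
  shows "S_of M h l = S_embed h ` M"
proof
  have lM: "l \<in> M" and lh: "l \<bullet> h = 1" using l by (auto simp: h_plane_def)
  note S_embed_linear = linear_add[OF linear_S_embed] linear_diff[OF linear_S_embed]
    linear_scale[OF linear_S_embed]
  show "S_of M h l \<subseteq> S_embed h ` M"
  proof
    fix s assume "s \<in> S_of M h l"
    then obtain x m j where s: "s = (x, 0) + of_int m *\<^sub>R hbar + of_int j *\<^sub>R plane_map h l"
      and x: "x \<in> M" "x \<bullet> h = 0"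
      unfolding S_of_def hperp_def by blast
    have "of_int 1 *\<^sub>R x + of_int 1 *\<^sub>R (of_int m *\<^sub>R h + of_int j *\<^sub>R l) \<in> M"
      by (intro lattice_lincomb M(1) x(1) lattice_lincomb[OF M(1,2) lM])
    moreover have "s = S_embed h (x + (of_int m *\<^sub>R h + of_int j *\<^sub>R l))"
      by (simp add: s S_embed_linear S_embed_orthogonal[OF x(2)] S_embed_self[OF M(3)]
          plane_map_eq_S_embed[OF lh])
    ultimately show "s \<in> S_embed h ` M" by simp
  qed
  show "S_embed h ` M \<subseteq> S_of M h l"
  proof
    fix s assume "s \<in> S_embed h ` M"
    then obtain y where s: "s = S_embed h y" and yM: "y \<in> M" by blast
    obtain a where a: "y \<bullet> h = of_int a"
      using lattice_inner_Ints[OF M(1) yM M(2)] Ints_cases by metis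
    have "of_int 1 *\<^sub>R y + of_int (-a) *\<^sub>R l \<in> M"
      by (intro lattice_lincomb M(1) yM lM)
    moreover have perp: "(y - of_int a *\<^sub>R l) \<bullet> h = 0"
      by (simp add: inner_diff_left a lh)
    ultimately have "y - of_int a *\<^sub>R l \<in> hperp M h"
      by (simp add: hperp_def)
    moreover have "s = (y - of_int a *\<^sub>R l, 0) + of_int 0 *\<^sub>R hbar + of_int a *\<^sub>R plane_map h l"
      by (simp add: s S_embed_linear S_embed_orthogonal[OF perp, symmetric]
          plane_map_eq_S_embed[OF lh])
    ultimately show "s \<in> S_of M h l"
      unfolding S_of_def by blast
  qed
qed

lemma lattice_S_embed_image:
  assumes "is_lattice M" "h \<in> M" "h \<bullet> h = 3"
  shows "is_lattice (S_embed h ` M)"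
  using assms lattice_inner_Ints[OF assms(1)]
  by (intro lattice_linear_image linear_S_embed inj_S_embed)
     (auto simp: inner_S_embed intro!: Ints_add Ints_mult)

lemma even_S_embed_image:
  assumes M: "is_lattice M" "h \<in> M" "h \<bullet> h = 3" and char: "characteristic M h"
  shows "is_even (S_embed h ` M)"
  unfolding is_even_def
proof
  fix s assume "s \<in> S_embed h ` M"
  then obtain y where s: "s = S_embed h y" and yM: "y \<in> M" by blast
  obtain a where a: "y \<bullet> h = of_int a"
    using lattice_inner_Ints[OF M(1) yM M(2)] Ints_cases by metis
  obtain k where k: "y \<bullet> y - y \<bullet> h = 2 * of_int k"
    using char yM unfolding characteristic_def by blast
  obtain k' where k': "a * (a + 1) = 2 * k'"
    by (metis evenE even_mult_iff odd_add odd_one)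
  have "s \<bullet> s = (y \<bullet> y - y \<bullet> h) + of_int (a * (a + 1))"
    by (simp add: s inner_S_embed[OF M(3)] a algebra_simps)
  also have "\<dots> = 2 * of_int (k + k')"
    by (simp only: k k' of_int_add of_int_mult) simp
  finally show "\<exists>k::int. s \<bullet> s = 2 * k" by blast
qed

lemma hbar_quarter_in_dual:
  assumes M: "is_lattice M" "h \<in> M" "h \<bullet> h = 3"
  shows "(0, sqrt 12 / 4) \<in> dual (S_embed h ` M)"
  unfolding dual_def
proof (intro CollectI conjI ballI)
  have "real 4 *\<^sub>R (0::'a, sqrt 12 / 4) = S_embed h h"
    by (simp add: S_embed_self[OF M(3)] hbar_def)
  then show "(0, sqrt 12 / 4) \<in> qspan (S_embed h ` M)"
    unfolding qspan_def using M(2) by (intro CollectI exI[of _ 4]) simp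
next
  fix z assume "z \<in> S_embed h ` M"
  then obtain y where z: "z = S_embed h y" and yM: "y \<in> M" by blast
  have "(0, sqrt 12 / 4) \<bullet> z = y \<bullet> h"
    by (simp add: z S_embed_def sqrt_12_squared algebra_simps)
  then show "(0, sqrt 12 / 4) \<bullet> z \<in> \<int>"
    using lattice_inner_Ints[OF M(1) yM M(2)] by simp
qed

lemma S_embed_image_orthogonal_hbar:
  "{x \<in> S_embed h ` M. x \<bullet> hbar = 0} = (\<lambda>x. (x, 0)) ` hperp M h"
proof (intro equalityI subsetI)
  fix s assume "s \<in> {x \<in> S_embed h ` M. x \<bullet> hbar = 0}"
  then obtain y where "s = S_embed h y" "y \<in> M" "y \<bullet> h = 0"
    by (auto simp: inner_S_embed_hbar)
  then show "s \<in> (\<lambda>x. (x, 0)) ` hperp M h"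
    by (simp add: S_embed_orthogonal hperp_def)
next
  fix s :: "_ \<times> real" assume "s \<in> (\<lambda>x. (x, 0)) ` hperp M h"
  then obtain y where "s = S_embed h y" "y \<in> M" "y \<bullet> h = 0"
    by (auto simp: S_embed_orthogonal hperp_def)
  then show "s \<in> {x \<in> S_embed h ` M. x \<bullet> hbar = 0}"
    by (simp add: inner_S_embed_hbar)
qed

lemma S_embed_image_roots_orthogonal_hbar:
  "{x \<in> S_embed h ` M. x \<bullet> hbar = 0 \<and> x \<bullet> x = 2}
     = (\<lambda>x. (x, 0)) ` {x \<in> hperp M h. x \<bullet> x = 2}"
proof -
  have "{x \<in> S_embed h ` M. x \<bullet> hbar = 0 \<and> x \<bullet> x = 2}
      = {x \<in> (\<lambda>x. (x, 0)) ` hperp M h. x \<bullet> x = 2}"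
    using S_embed_image_orthogonal_hbar[of h M] by blast
  also have "\<dots> = (\<lambda>x. (x, 0)) ` {x \<in> hperp M h. x \<bullet> x = 2}"
    by auto
  finally show ?thesis .
qed

lemma S_embed_image_level_set:
  assumes "h \<bullet> h = 3"
  shows "plane_map h ` {e \<in> M. e \<bullet> e = c \<and> e \<bullet> h = 1}
           = {p \<in> S_embed h ` M. p \<bullet> p = c + 1 \<and> p \<bullet> hbar = 4}"
  using assms
  by (force simp: plane_map_eq_S_embed inner_S_embed inner_S_embed_hbar)

lemma bij_betw_plane_map_level_set:
  assumes "h \<bullet> h = 3" and "B = {p \<in> S_embed h ` M. p \<bullet> p = c + 1 \<and> p \<bullet> hbar = 4}"
  shows "bij_betw (plane_map h) {e \<in> M. e \<bullet> e = c \<and> e \<bullet> h = 1} B"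
  unfolding assms(2) S_embed_image_level_set[OF assms(1), symmetric]
  by (intro bij_betw_imageI inj_on_subset[OF inj_plane_map]) simp_all

theorem proposition3p1:
  fixes M :: "'v::euclidean_space set" and h l :: 'v
  assumes "is_lattice M" and "h \<in> M" and "h \<bullet> h = 3"
    and "characteristic M h" and "h_plane M h l"
  shows "(\<forall>l'. h_plane M h l' \<longrightarrow> S_of M h l' = S_of M h l)
    \<and> is_lattice (S_of M h l) \<and> is_even (S_of M h l) \<and> pos_def (S_of M h l)
    \<and> (\<exists>y\<in>dual (S_of M h l). hbar = 4 *\<^sub>R y)
    \<and> {x \<in> S_of M h l. x \<bullet> hbar = 0} = (\<lambda>x. (x, 0)) ` hperp M h
    \<and> {x \<in> S_of M h l. x \<bullet> hbar = 0 \<and> x \<bullet> x = 2} = (\<lambda>x. (x, 0)) ` {x \<in> hperp M h. x \<bullet> x = 2}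
    \<and> bij_betw (plane_map h) {x. h_plane M h x} {p \<in> S_of M h l. p \<bullet> p = 4 \<and> p \<bullet> hbar = 4}
    \<and> bij_betw (plane_map h) {e \<in> M. e \<bullet> e = 1 \<and> e \<bullet> h = 1}
                              {e \<in> S_of M h l. e \<bullet> e = 2 \<and> e \<bullet> hbar = 4}"
proof -
  note M = assms(1-3)
  have S_indep: "S_of M h l' = S_embed h ` M" if "h_plane M h l'" for l'
    using S_of_eq_S_embed_image[OF M that] .
  note S = S_indep[OF assms(5)]
  have planes: "{x. h_plane M h x} = {e \<in> M. e \<bullet> e = 3 \<and> e \<bullet> h = 1}"
    by (auto simp: h_plane_def)
  have "hbar = 4 *\<^sub>R (0::'v, sqrt 12 / 4)"
    by (simp add: hbar_def)
  then have dual: "\<exists>y\<in>dual (S_of M h l). hbar = 4 *\<^sub>R y"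
    using hbar_quarter_in_dual[OF M] unfolding S by blast
  have "bij_betw (plane_map h) {x. h_plane M h x} {p \<in> S_of M h l. p \<bullet> p = 4 \<and> p \<bullet> hbar = 4}"
    unfolding planes S by (rule bij_betw_plane_map_level_set[OF M(3)]) simp
  moreover have "bij_betw (plane_map h) {e \<in> M. e \<bullet> e = 1 \<and> e \<bullet> h = 1}
      {e \<in> S_of M h l. e \<bullet> e = 2 \<and> e \<bullet> hbar = 4}"
    unfolding S by (rule bij_betw_plane_map_level_set[OF M(3)]) simp
  ultimately show ?thesis
    using S_indep S lattice_S_embed_image[OF M] even_S_embed_image[OF M assms(4)] dual
      S_embed_image_orthogonal_hbar[of h M] S_embed_image_roots_orthogonal_hbar[of h M]
    by (simp add: pos_def_def)
qed

end
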